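(* Let $B_\tau=1$, $C_\tau=\tau$ and $\bar{B}_\tau=B_\tau(1-C_\tau)=1-\tau$. Suppose $\bar{A}_{\tau,\sigma}$ has the form $$\bar{A}_{\tau,\sigma}=\alpha_{(0,0)}-\tfrac12\xi_1P_1(\sigma)+\tfrac12\xi_1P_1(\tau)+\sum_{\substack{i+j\ \text{even}\\ i+j>1}}\alpha_{(i,j)}P_i(\tau)P_j(\sigma),\qquad \tau,\sigma\in[0,1],$$ where $\xi_\iota=\frac{1}{2\sqrt{4\iota^2-1}}$ (so $\xi_1=\frac{1}{2\sqrt3}$) and the $\alpha_{(i,j)}$ are arbitrary real numbers (for which the series converges, e.g. only finitely many nonzero). Then the csRKN method $(\bar{A}_{\tau,\sigma},\bar{B}_\tau,B_\tau,C_\tau)$ is symmetric.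
   Context: Consider $q''=f(t,q)$, $q(t_0)=q_0$, $q'(t_0)=q'_0$ with $f:\mathbb{R}\times\mathbb{R}^d\to\mathbb{R}^d$ smooth. The csRKN method with coefficients $(\bar{A}_{\tau,\sigma},\bar{B}_\tau,B_\tau,C_\tau)$ and step size $h$ is $$Q_\tau=q_0+hC_\tau q'_0+h^2\int_0^1\bar{A}_{\tau,\sigma}f(t_0+C_\sigma h,Q_\sigma)\,d\sigma,\ \tau\in[0,1],$$ $$q_1=q_0+hq'_0+h^2\int_0^1\bar{B}_\tau f(t_0+C_\tau h,Q_\tau)\,d\tau,\qquad q'_1=q'_0+h\int_0^1 B_\tau f(t_0+C_\tau h,Q_\tau)\,d\tau.$$ A one-step method $\Phi_h$ is symmetric if $\Phi_h=\Phi_{-h}^{-1}$, i.e. exchanging $h\leftrightarrow-h$, $(q_0,q_0')\leftrightarrow(q_1,q_1')$, $t_0\leftrightarrow t_1=t_0+h$ leaves the method unaltered. $P_k$ denotes the normalized shifted Legendre polynomial on $[0,1]$: $P_0(x)=1$, $P_k(x)=\frac{\sqrt{2k+1}}{k!}\frac{d^k}{dx^k}[(x^2-x)^k]$, so that $\int_0^1P_jP_k\,dx=\delta_{jk}$; e.g. $P_1(x)=\sqrt3(2x-1)$, $P_2(x)=\sqrt5(6x^2-6x+1)$. *)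

theory Defs
  imports "HOL-Analysis.Analysis"
begin

text \<open>Normalized shifted Legendre polynomial on [0,1] via the Rodrigues formula:
  P_0 = 1, P_k(x) = sqrt(2k+1)/k! * d^k/dx^k [(x^2-x)^k].\<close>
definition legP :: "nat \<Rightarrow> real \<Rightarrow> real" where
  "legP k x = sqrt (2 * real k + 1) / fact k * ((deriv ^^ k) (\<lambda>y. (y\<^sup>2 - y) ^ k)) x"

definition xi :: "nat \<Rightarrow> real" where
  "xi \<iota> = 1 / (2 * sqrt (4 * (real \<iota>)\<^sup>2 - 1))"

text \<open>One step of the csRKN method (Abar, Bbar, B, C) for q'' = f(t,q), from (t0,q0,q0')
  with step size h, producing (q1,q1').\<close>
definition csRKN_step ::
  "(real \<Rightarrow> real \<Rightarrow> real) \<Rightarrow> (real \<Rightarrow> real) \<Rightarrow> (real \<Rightarrow> real) \<Rightarrow> (real \<Rightarrow> real)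
   \<Rightarrow> (real \<Rightarrow> 'a::euclidean_space \<Rightarrow> 'a) \<Rightarrow> real \<Rightarrow> real \<Rightarrow> 'a \<Rightarrow> 'a \<Rightarrow> 'a \<Rightarrow> 'a \<Rightarrow> bool"
where
  "csRKN_step Abar Bbar B C f t0 h q0 p0 q1 p1 \<longleftrightarrow>
    (\<exists>Q :: real \<Rightarrow> 'a.
      (\<forall>\<tau>\<in>{0..1}.
         (\<lambda>\<sigma>. Abar \<tau> \<sigma> *\<^sub>R f (t0 + C \<sigma> * h) (Q \<sigma>)) integrable_on {0..1} \<and>
         Q \<tau> = q0 + (h * C \<tau>) *\<^sub>R p0
                + h\<^sup>2 *\<^sub>R integral {0..1} (\<lambda>\<sigma>. Abar \<tau> \<sigma> *\<^sub>R f (t0 + C \<sigma> * h) (Q \<sigma>))) \<and>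
      (\<lambda>\<tau>. Bbar \<tau> *\<^sub>R f (t0 + C \<tau> * h) (Q \<tau>)) integrable_on {0..1} \<and>
      (\<lambda>\<tau>. B \<tau> *\<^sub>R f (t0 + C \<tau> * h) (Q \<tau>)) integrable_on {0..1} \<and>
      q1 = q0 + h *\<^sub>R p0 + h\<^sup>2 *\<^sub>R integral {0..1} (\<lambda>\<tau>. Bbar \<tau> *\<^sub>R f (t0 + C \<tau> * h) (Q \<tau>)) \<and>
      p1 = p0 + h *\<^sub>R integral {0..1} (\<lambda>\<tau>. B \<tau> *\<^sub>R f (t0 + C \<tau> * h) (Q \<tau>)))"

text \<open>Symmetry Phi_h = Phi_{-h}^{-1}: exchanging h <-> -h, (q0,q0') <-> (q1,q1'),
  t0 <-> t1 = t0 + h leaves the method unaltered.\<close>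
definition csRKN_symmetric ::
  "(real \<Rightarrow> real \<Rightarrow> real) \<Rightarrow> (real \<Rightarrow> real) \<Rightarrow> (real \<Rightarrow> real) \<Rightarrow> (real \<Rightarrow> real)
   \<Rightarrow> (real \<Rightarrow> 'a::euclidean_space \<Rightarrow> 'a) \<Rightarrow> bool"
where
  "csRKN_symmetric Abar Bbar B C f \<longleftrightarrow>
    (\<forall>t0 h q0 p0 q1 p1.
       csRKN_step Abar Bbar B C f t0 h q0 p0 q1 p1 \<longleftrightarrow>
       csRKN_step Abar Bbar B C f (t0 + h) (- h) q1 p1 q0 p0)"

end

theory Submission
  imports Defs "HOL-Computational_Algebra.Polynomial"
begin

text \<open>If \<open>Abar (1 - \<tau>) (1 - \<sigma>) = Abar \<tau> \<sigma> + \<sigma> - \<tau>\<close>, the reversed step (from the end point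
  with step size \<open>-h\<close>) is solved by the reflected stage function \<open>\<tau> \<mapsto> Q (1 - \<tau>)\<close>:
  substituting \<open>\<sigma> \<mapsto> 1 - \<sigma>\<close> in the stage integrals, the difference between the forward
  and backward stage equations is exactly accounted for by the update integrals
  \<open>\<integral>(1 - \<sigma>) F\<close> and \<open>\<integral>F\<close>. The given \<open>Abar\<close> satisfies this condition because
  \<open>P\<^sub>k (1 - x) = (-1)\<^sup>k P\<^sub>k x\<close>: every series term with \<open>i + j\<close> even is invariant under
  \<open>(\<tau>, \<sigma>) \<mapsto> (1 - \<tau>, 1 - \<sigma>)\<close>, and the \<open>P\<^sub>1\<close> terms add up to \<open>(\<tau> - \<sigma>) / 2\<close>.\<close>

lemma has_integral_reflect_interval:
  fixes g :: "real \<Rightarrow> 'a::euclidean_space"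
  assumes "(g has_integral I) {a..b}"
  shows "((\<lambda>x. g (a + b - x)) has_integral I) {a..b}"
proof -
  have "((\<lambda>x. g (- x + (a + b))) has_integral I) ((\<lambda>x. - x + (a + b)) ` cbox a b)"
    using has_integral_affinity[of g I a b "-1" "a + b"] assms by simp
  moreover have "(\<lambda>x::real. - x + (a + b)) ` cbox a b = {a..b}"
    by (auto intro!: image_eqI[where x="a + b - _"])
  ultimately show ?thesis by simp
qed

lemma higher_deriv_poly: "(deriv ^^ n) (poly (p :: real poly)) = poly ((pderiv ^^ n) p)"
proof (induction n arbitrary: p)
  case (Suc n)
  have "deriv (poly q) = poly (pderiv q)" for q :: "real poly"
    by (rule ext, rule DERIV_imp_deriv, rule poly_DERIV)
  then show ?case by (simp add: Suc)
qed simp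

lemma poly_pderiv_reflect:
  fixes p :: "real poly"
  assumes "\<And>x. poly p (c - x) = s * poly p x"
  shows "poly (pderiv p) (c - x) = - s * poly (pderiv p) x"
proof -
  have "((\<lambda>x. poly p (c - x)) has_real_derivative poly (pderiv p) (c - x) * -1) (at x)"
    by (rule DERIV_chain2[OF poly_DERIV]) (auto intro!: derivative_eq_intros)
  then have "((\<lambda>x. s * poly p x) has_real_derivative - poly (pderiv p) (c - x)) (at x)"
    by (simp add: assms)
  moreover have "((\<lambda>x. s * poly p x) has_real_derivative s * poly (pderiv p) x) (at x)"
    by (auto intro!: derivative_eq_intros)
  ultimately show ?thesis
    using DERIV_unique by fastforce
qed

lemma poly_higher_pderiv_reflect:
  fixes p :: "real poly"
  assumes "\<And>x. poly p (c - x) = s * poly p x"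
  shows "poly ((pderiv ^^ n) p) (c - x) = (-1) ^ n * s * poly ((pderiv ^^ n) p) x"
proof (induction n arbitrary: x)
  case (Suc n)
  then show ?case using poly_pderiv_reflect[where p = "(pderiv ^^ n) p" and s = "(-1) ^ n * s"] by simp
qed (simp add: assms)

lemma legP_reflect: "legP k (1 - x) = (-1) ^ k * legP k x"
proof -
  have rodrigues_poly: "(\<lambda>y::real. (y\<^sup>2 - y) ^ k) = poly ([:0, -1, 1:] ^ k)"
    by (rule ext) (simp add: power2_eq_square algebra_simps)
  have "poly ([:0, -1, 1:] ^ k) (1 - x) = 1 * poly ([:0, -1, 1:] ^ k) x" for x :: real
    by (simp add: algebra_simps)
  from poly_higher_pderiv_reflect[OF this, of k x] show ?thesis
    unfolding legP_def rodrigues_poly higher_deriv_poly by simp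
qed

lemma legP_1: "legP 1 x = sqrt 3 * (2 * x - 1)"
proof -
  have "deriv (\<lambda>y::real. y\<^sup>2 - y) x = 2 * x - 1"
    by (rule DERIV_imp_deriv) (auto intro!: derivative_eq_intros)
  then show ?thesis by (simp add: legP_def)
qed

lemma legP_product_reflect:
  "legP i (1 - \<tau>) * legP j (1 - \<sigma>) = (-1) ^ (i + j) * (legP i \<tau> * legP j \<sigma>)"
  by (simp add: legP_reflect power_add)

lemma stage_integral_reflect:
  fixes F :: "real \<Rightarrow> 'a::euclidean_space"
  assumes sym: "\<And>\<tau> \<sigma>. \<tau> \<in> {0..1} \<Longrightarrow> \<sigma> \<in> {0..1} \<Longrightarrow> Abar (1 - \<tau>) (1 - \<sigma>) = Abar \<tau> \<sigma> + \<sigma> - \<tau>"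
    and \<tau>: "\<tau> \<in> {0..1}"
    and J: "((\<lambda>\<sigma>. Abar (1 - \<tau>) \<sigma> *\<^sub>R F \<sigma>) has_integral J) {0..1}"
    and I1: "((\<lambda>\<sigma>. (1 - \<sigma>) *\<^sub>R F \<sigma>) has_integral I1) {0..1}"
    and IF: "(F has_integral IF) {0..1}"
  shows "((\<lambda>\<sigma>. Abar \<tau> \<sigma> *\<^sub>R F (1 - \<sigma>)) has_integral J - I1 + \<tau> *\<^sub>R IF) {0..1}"
proof -
  have "((\<lambda>\<sigma>. Abar (1 - \<tau>) \<sigma> *\<^sub>R F \<sigma> - (1 - \<sigma>) *\<^sub>R F \<sigma> + \<tau> *\<^sub>R F \<sigma>)
          has_integral J - I1 + \<tau> *\<^sub>R IF) {0..1}"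
    by (intro has_integral_add has_integral_diff J I1 has_integral_cmul IF)
  then have "((\<lambda>\<sigma>. Abar \<tau> (1 - \<sigma>) *\<^sub>R F \<sigma>) has_integral J - I1 + \<tau> *\<^sub>R IF) {0..1}"
  proof (rule has_integral_eq[rotated])
    fix \<sigma> :: real
    assume "\<sigma> \<in> {0..1}"
    then have "Abar (1 - \<tau>) \<sigma> - (1 - \<sigma>) + \<tau> = Abar \<tau> (1 - \<sigma>)"
      using sym[OF \<tau>, of "1 - \<sigma>"] by simp
    then show "Abar (1 - \<tau>) \<sigma> *\<^sub>R F \<sigma> - (1 - \<sigma>) *\<^sub>R F \<sigma> + \<tau> *\<^sub>R F \<sigma> = Abar \<tau> (1 - \<sigma>) *\<^sub>R F \<sigma>"
      by (simp flip: scaleR_left_diff_distrib scaleR_left_distrib)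
  qed
  from has_integral_reflect_interval[OF this] show ?thesis by simp
qed

lemma csRKN_step_reverse:
  fixes f :: "real \<Rightarrow> 'a::euclidean_space \<Rightarrow> 'a"
  assumes sym: "\<And>\<tau> \<sigma>. \<tau> \<in> {0..1} \<Longrightarrow> \<sigma> \<in> {0..1} \<Longrightarrow> Abar (1 - \<tau>) (1 - \<sigma>) = Abar \<tau> \<sigma> + \<sigma> - \<tau>"
    and step: "csRKN_step Abar (\<lambda>\<tau>. 1 - \<tau>) (\<lambda>\<tau>. 1) (\<lambda>\<tau>. \<tau>) f t0 h q0 p0 q1 p1"
  shows "csRKN_step Abar (\<lambda>\<tau>. 1 - \<tau>) (\<lambda>\<tau>. 1) (\<lambda>\<tau>. \<tau>) f (t0 + h) (- h) q1 p1 q0 p0"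
proof -
  obtain Q where
    stage: "\<And>\<tau>. \<tau> \<in> {0..1} \<Longrightarrow>
      (\<lambda>\<sigma>. Abar \<tau> \<sigma> *\<^sub>R f (t0 + \<sigma> * h) (Q \<sigma>)) integrable_on {0..1} \<and>
      Q \<tau> = q0 + (h * \<tau>) *\<^sub>R p0 + h\<^sup>2 *\<^sub>R integral {0..1} (\<lambda>\<sigma>. Abar \<tau> \<sigma> *\<^sub>R f (t0 + \<sigma> * h) (Q \<sigma>))"
    and int_I1: "(\<lambda>\<tau>. (1 - \<tau>) *\<^sub>R f (t0 + \<tau> * h) (Q \<tau>)) integrable_on {0..1}"
    and int_IF: "(\<lambda>\<tau>. 1 *\<^sub>R f (t0 + \<tau> * h) (Q \<tau>)) integrable_on {0..1}"
    and q1: "q1 = q0 + h *\<^sub>R p0 + h\<^sup>2 *\<^sub>R integral {0..1} (\<lambda>\<tau>. (1 - \<tau>) *\<^sub>R f (t0 + \<tau> * h) (Q \<tau>))"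
    and p1: "p1 = p0 + h *\<^sub>R integral {0..1} (\<lambda>\<tau>. 1 *\<^sub>R f (t0 + \<tau> * h) (Q \<tau>))"
    using step unfolding csRKN_step_def by blast
  define F where "F \<sigma> = f (t0 + \<sigma> * h) (Q \<sigma>)" for \<sigma>
  define I1 where "I1 = integral {0..1} (\<lambda>\<tau>. (1 - \<tau>) *\<^sub>R F \<tau>)"
  define IF where "IF = integral {0..1} F"
  have I1: "((\<lambda>\<tau>. (1 - \<tau>) *\<^sub>R F \<tau>) has_integral I1) {0..1}"
    and IF: "(F has_integral IF) {0..1}"
    using int_I1 int_IF unfolding I1_def IF_def F_def by (simp_all add: has_integral_integral)
  have q1: "q1 = q0 + h *\<^sub>R p0 + h\<^sup>2 *\<^sub>R I1" and p1: "p1 = p0 + h *\<^sub>R IF"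
    using q1 p1 unfolding I1_def IF_def F_def by simp_all
  have reversed_rhs: "f (t0 + h + \<sigma> * - h) (Q (1 - \<sigma>)) = F (1 - \<sigma>)" for \<sigma>
    unfolding F_def by (simp add: algebra_simps)
  have "((\<lambda>\<tau>. F \<tau> - (1 - \<tau>) *\<^sub>R F \<tau>) has_integral IF - I1) {0..1}"
    using IF I1 by (rule has_integral_diff)
  then have "((\<lambda>\<tau>. \<tau> *\<^sub>R F \<tau>) has_integral IF - I1) {0..1}"
    by (simp add: algebra_simps)
  from has_integral_reflect_interval[OF this]
  have I1_rev: "((\<lambda>\<tau>. (1 - \<tau>) *\<^sub>R F (1 - \<tau>)) has_integral IF - I1) {0..1}"
    by simp
  have IF_rev: "((\<lambda>\<tau>. 1 *\<^sub>R F (1 - \<tau>)) has_integral IF) {0..1}"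
    using has_integral_reflect_interval[OF IF] by simp
  define J where "J \<tau> = integral {0..1} (\<lambda>\<sigma>. Abar (1 - \<tau>) \<sigma> *\<^sub>R F \<sigma>)" for \<tau>
  have stage_rev: "((\<lambda>\<sigma>. Abar \<tau> \<sigma> *\<^sub>R F (1 - \<sigma>)) has_integral J \<tau> - I1 + \<tau> *\<^sub>R IF) {0..1}"
    "Q (1 - \<tau>) = q1 + (- h * \<tau>) *\<^sub>R p1 + (- h)\<^sup>2 *\<^sub>R (J \<tau> - I1 + \<tau> *\<^sub>R IF)"
    if \<tau>: "\<tau> \<in> {0..1}" for \<tau>
  proof -
    have "1 - \<tau> \<in> {0..1}" using \<tau> by auto
    note stage = stage[OF this, folded F_def, folded J_def]
    show "((\<lambda>\<sigma>. Abar \<tau> \<sigma> *\<^sub>R F (1 - \<sigma>)) has_integral J \<tau> - I1 + \<tau> *\<^sub>R IF) {0..1}"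
      unfolding J_def by (intro stage_integral_reflect[OF sym \<tau> _ I1 IF] integrable_integral conjunct1[OF stage])
    show "Q (1 - \<tau>) = q1 + (- h * \<tau>) *\<^sub>R p1 + (- h)\<^sup>2 *\<^sub>R (J \<tau> - I1 + \<tau> *\<^sub>R IF)"
      using stage unfolding q1 p1 by (simp add: algebra_simps power2_eq_square)
  qed
  show ?thesis unfolding csRKN_step_def
  proof (rule exI[of _ "\<lambda>\<sigma>. Q (1 - \<sigma>)"], unfold reversed_rhs, intro conjI ballI)
    show "(\<lambda>\<tau>. (1 - \<tau>) *\<^sub>R F (1 - \<tau>)) integrable_on {0..1}"
      using I1_rev by blast
    show "(\<lambda>\<tau>. 1 *\<^sub>R F (1 - \<tau>)) integrable_on {0..1}"
      using IF_rev by blast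
    show "q0 = q1 + - h *\<^sub>R p1 + (- h)\<^sup>2 *\<^sub>R integral {0..1} (\<lambda>\<tau>. (1 - \<tau>) *\<^sub>R F (1 - \<tau>))"
      unfolding integral_unique[OF I1_rev] q1 p1 by (simp add: algebra_simps power2_eq_square)
    show "p0 = p1 + - h *\<^sub>R integral {0..1} (\<lambda>\<tau>. 1 *\<^sub>R F (1 - \<tau>))"
      unfolding integral_unique[OF IF_rev] p1 by simp
  next
    fix \<tau> :: real
    assume "\<tau> \<in> {0..1}"
    note stage_rev = stage_rev[OF this]
    then show "(\<lambda>\<sigma>. Abar \<tau> \<sigma> *\<^sub>R F (1 - \<sigma>)) integrable_on {0..1}"
      by blast
    show "Q (1 - \<tau>) = q1 + (- h * \<tau>) *\<^sub>R p1 + (- h)\<^sup>2 *\<^sub>R integral {0..1} (\<lambda>\<sigma>. Abar \<tau> \<sigma> *\<^sub>R F (1 - \<sigma>))"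
      unfolding integral_unique[OF stage_rev(1)] by (rule stage_rev(2))
  qed
qed

lemma csRKN_symmetricI:
  fixes f :: "real \<Rightarrow> 'a::euclidean_space \<Rightarrow> 'a"
  assumes "\<And>\<tau> \<sigma>. \<tau> \<in> {0..1} \<Longrightarrow> \<sigma> \<in> {0..1} \<Longrightarrow> Abar (1 - \<tau>) (1 - \<sigma>) = Abar \<tau> \<sigma> + \<sigma> - \<tau>"
  shows "csRKN_symmetric Abar (\<lambda>\<tau>. 1 - \<tau>) (\<lambda>\<tau>. 1) (\<lambda>\<tau>. \<tau>) f"
  unfolding csRKN_symmetric_def
proof (intro allI iffI)
  fix t0 h q0 p0 q1 p1
  assume "csRKN_step Abar (\<lambda>\<tau>. 1 - \<tau>) (\<lambda>\<tau>. 1) (\<lambda>\<tau>. \<tau>) f (t0 + h) (- h) q1 p1 q0 p0"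
  from csRKN_step_reverse[OF assms this]
  show "csRKN_step Abar (\<lambda>\<tau>. 1 - \<tau>) (\<lambda>\<tau>. 1) (\<lambda>\<tau>. \<tau>) f t0 h q0 p0 q1 p1"
    by simp
qed (rule csRKN_step_reverse[OF assms])

theorem theorem3p3:
  fixes Abar :: "real \<Rightarrow> real \<Rightarrow> real"
    and \<alpha> :: "nat \<times> nat \<Rightarrow> real"
    and f :: "real \<Rightarrow> real ^ 'd \<Rightarrow> real ^ 'd"
  assumes summ: "\<And>\<tau> \<sigma>. \<tau> \<in> {0..1} \<Longrightarrow> \<sigma> \<in> {0..1} \<Longrightarrow>
      (\<lambda>(i, j). \<alpha> (i, j) * legP i \<tau> * legP j \<sigma>) summable_on {(i, j). even (i + j) \<and> i + j > 1}"
    and Aform: "\<And>\<tau> \<sigma>. \<tau> \<in> {0..1} \<Longrightarrow> \<sigma> \<in> {0..1} \<Longrightarrow>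
      Abar \<tau> \<sigma> = \<alpha> (0, 0) - 1/2 * xi 1 * legP 1 \<sigma> + 1/2 * xi 1 * legP 1 \<tau>
        + (\<Sum>\<^sub>\<infinity>(i, j)\<in>{(i, j). even (i + j) \<and> i + j > 1}. \<alpha> (i, j) * legP i \<tau> * legP j \<sigma>)"
  shows "csRKN_symmetric Abar (\<lambda>\<tau>. 1 - \<tau>) (\<lambda>\<tau>. 1) (\<lambda>\<tau>. \<tau>) f"
proof (rule csRKN_symmetricI)
  fix \<tau> \<sigma> :: real
  assume \<tau>: "\<tau> \<in> {0..1}" and \<sigma>: "\<sigma> \<in> {0..1}"
  let ?E = "{(i, j). even (i + j) \<and> i + j > (1::nat)}"
  \<comment> \<open>The identity holds termwise.\<close>
  have series_reflect:
    "(\<Sum>\<^sub>\<infinity>(i, j)\<in>?E. \<alpha> (i, j) * legP i (1 - \<tau>) * legP j (1 - \<sigma>))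
       = (\<Sum>\<^sub>\<infinity>(i, j)\<in>?E. \<alpha> (i, j) * legP i \<tau> * legP j \<sigma>)"
    by (rule infsum_cong) (auto simp: mult.assoc legP_product_reflect)
  have linear_part: "1/2 * xi 1 * legP 1 x = (2 * x - 1) / 4" for x
    unfolding legP_1 xi_def by simp
  have "1 - \<tau> \<in> {0..1}" "1 - \<sigma> \<in> {0..1}" using \<tau> \<sigma> by auto
  then show "Abar (1 - \<tau>) (1 - \<sigma>) = Abar \<tau> \<sigma> + \<sigma> - \<tau>"
    unfolding Aform[OF \<tau> \<sigma>] Aform[OF \<open>1 - \<tau> \<in> {0..1}\<close> \<open>1 - \<sigma> \<in> {0..1}\<close>] series_reflect linear_part
    by (simp add: field_simps)
qed

end
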